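(* Let $H$ be a real Hilbert space, $C\subset H$ nonempty closed convex with metric projection $P$, and $A,F:H\to H$ such that: $A$ is linear, self-adjoint, $\lambda$-strongly monotone and $L_A$-Lipschitz continuous; $F$ is $L_F$-Lipschitz continuous; $A,F$ are sequentially weak-to-weak continuous; the couple $(A,F)$ is monotone; $\mathrm{Sol}(A,F,C)\ne\emptyset$ and $\mathcal C:=A(\mathrm{Sol}(A,F,C))$ is convex. Let $\{\alpha_k\},\{\mu_k\},\{h_k\}$ be sequences of positive numbers with $$\sum_{k=0}^\infty h_k\alpha_k=\infty,\quad \lim_{k\to\infty}\mu_kh_k=0,\quad \lim_{k\to\infty}\mu_k\alpha_k=\infty,\quad \lim_{k\to\infty}\frac{|\alpha_k-\alpha_{k+1}|}{h_k\alpha_k^2}=0,\quad \lim_{k\to\infty}\alpha_k=0.$$ Given $x^0\in H$, define for $k\ge0$ $$y^k=P\big(F_{\alpha_k}x^k-\mu_kAx^k\big),\qquad x^{k+1}=x^k+h_k\big(y^k-F_{\alpha_k}x^k\big),$$ where $F_\alpha:=F+\alpha I$. Then $x^k\to x^\dagger$ as $k\to\infty$, where $x^\dagger:=A^{-1}u^\dagger$ and $u^\dagger$ is the unique solution of the problem: find $u\in\mathcal C$ with $\langle A^{-1}u,v-u\rangle\ge0$ for all $v\in\mathcal C$.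
   Context: $\mathrm{GVI}(A,F,C)$: find $x^*\in H$ with $Fx^*\in C$ and $\langle Ax^*,y-Fx^*\rangle\ge0$ for all $y\in C$; $\mathrm{Sol}(A,F,C)$ is its solution set. The couple $(A,F)$ is monotone if $\langle Ax-Ay,Fx-Fy\rangle\ge0$ for all $x,y\in H$. Sequentially weak-to-weak continuous: $x^k\rightharpoonup\bar x$ implies $Ax^k\rightharpoonup A\bar x$. The point $x^\dagger$ belongs to $\mathrm{Sol}(A,F,C)$. *)

theory Defs
  imports "HOL-Analysis.Analysis"
begin

definition metric_proj :: "'a::real_inner set \<Rightarrow> 'a \<Rightarrow> 'a" where
  "metric_proj C x = (SOME p. p \<in> C \<and> (\<forall>y\<in>C. norm (x - p) \<le> norm (x - y)))"

definition weak_conv :: "(nat \<Rightarrow> 'a::real_inner) \<Rightarrow> 'a \<Rightarrow> bool" where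
  "weak_conv xs x \<longleftrightarrow> (\<forall>y. (\<lambda>k. inner (xs k) y) \<longlonglongrightarrow> inner x y)"

definition seq_weak_weak_cont :: "('a::real_inner \<Rightarrow> 'a) \<Rightarrow> bool" where
  "seq_weak_weak_cont A \<longleftrightarrow> (\<forall>xs x. weak_conv xs x \<longrightarrow> weak_conv (\<lambda>k. A (xs k)) (A x))"

definition Sol :: "('a::real_inner \<Rightarrow> 'a) \<Rightarrow> ('a \<Rightarrow> 'a) \<Rightarrow> 'a set \<Rightarrow> 'a set" where
  "Sol A F C = {x. F x \<in> C \<and> (\<forall>y\<in>C. inner (A x) (y - F x) \<ge> 0)}"

definition monotone_couple :: "('a::real_inner \<Rightarrow> 'a) \<Rightarrow> ('a \<Rightarrow> 'a) \<Rightarrow> bool" where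
  "monotone_couple A F \<longleftrightarrow> (\<forall>x y. inner (A x - A y) (F x - F y) \<ge> 0)"

end

theory Submission
  imports Defs
begin

(*
  For \<alpha> > 0 the regularized problem GVI(A, F + \<alpha>I, C) has exactly one solution w(\<alpha>): it is
  the fixed point of the step map z \<mapsto> z + h (P(F z + \<alpha>z - \<mu> A z) - F z - \<alpha>z), which contracts
  the energy <A d, d> of differences d once \<mu>\<alpha> is large and \<mu>h small. Monotonicity of (A, F)
  makes the energy of w(\<alpha>) nonincreasing in \<alpha> and bounded by that of any solution of
  GVI(A, F, C), so w(\<alpha>) converges as \<alpha> \<rightarrow> 0 to the solution x\<^sup>\<dagger> with <A x\<^sup>\<dagger>, x - x\<^sup>\<dagger>> \<ge> 0 on
  Sol(A, F, C); for u = A x\<^sup>\<dagger> this is the variational inequality defining u\<^sup>\<dagger>.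
  Along the iteration, e\<^sub>k = <A d\<^sub>k, d\<^sub>k> with d\<^sub>k = x\<^sup>k - w(\<alpha>\<^sub>k) satisfies
  e\<^sub>k\<^sub>+\<^sub>1 \<le> (1 - t\<^sub>k) e\<^sub>k + t\<^sub>k c\<^sub>k with t\<^sub>k = h\<^sub>k \<alpha>\<^sub>k / 2, where c\<^sub>k \<rightarrow> 0 by the condition on
  |\<alpha>\<^sub>k - \<alpha>\<^sub>k\<^sub>+\<^sub>1|; since \<Sum> t\<^sub>k = \<infinity>, this forces e\<^sub>k \<rightarrow> 0.
*)

lemma norm_diff_midpoint_sq:
  fixes x a b :: "'a::real_inner"
  shows "(norm (a - b))\<^sup>2 = 2 * (norm (x - a))\<^sup>2 + 2 * (norm (x - b))\<^sup>2 - 4 * (norm (x - (1/2) *\<^sub>R (a + b)))\<^sup>2"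
  unfolding power2_norm_eq_inner
  by (simp add: inner_commute algebra_simps)

context
  fixes C :: "'a::{real_inner,complete_space} set"
  assumes C_ne: "C \<noteq> {}" and C_closed: "closed C" and C_convex: "convex C"
begin

lemma nearest_point_exists: "\<exists>p\<in>C. \<forall>y\<in>C. norm (x - p) \<le> norm (x - y)"
proof -
  define d where "d = infdist x C"
  have d_le: "d \<le> norm (x - y)" if "y \<in> C" for y
    using infdist_le[OF that, of x] by (simp add: d_def dist_norm)
  have "\<exists>c\<in>C. (norm (x - c))\<^sup>2 < d\<^sup>2 + 1 / Suc n" for n
  proof -
    have "d < sqrt (d\<^sup>2 + 1 / Suc n)"
      using infdist_nonneg[of x C] by (simp add: d_def real_less_rsqrt)
    then obtain c where "c \<in> C" "dist x c < sqrt (d\<^sup>2 + 1 / Suc n)"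
      using C_ne cINF_less_iff[of C "dist x"] by (auto simp: d_def infdist_notempty)
    then have "(norm (x - c))\<^sup>2 < (sqrt (d\<^sup>2 + 1 / Suc n))\<^sup>2"
      by (intro power_strict_mono) (auto simp: dist_norm)
    then show ?thesis using \<open>c \<in> C\<close> by auto
  qed
  then obtain c where c_in: "\<And>n. c n \<in> C" and c_near: "\<And>n. (norm (x - c n))\<^sup>2 < d\<^sup>2 + 1 / Suc n"
    by metis
  \<comment> \<open>The parallelogram law and convexity of \<open>C\<close> make any minimizing sequence Cauchy.\<close>
  have c_close: "(norm (c m - c n))\<^sup>2 \<le> 2 / Suc m + 2 / Suc n" for m n
  proof -
    have "(1/2) *\<^sub>R (c m + c n) \<in> C"
      using convexD[OF C_convex c_in c_in, of "1/2" "1/2"] by (simp add: scaleR_add_right)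
    then have "d\<^sup>2 \<le> (norm (x - (1/2) *\<^sub>R (c m + c n)))\<^sup>2"
      using d_le infdist_nonneg[of x C] by (simp add: d_def power_mono)
    then show ?thesis
      using c_near[of m] c_near[of n] norm_diff_midpoint_sq[of "c m" "c n" x] by linarith
  qed
  have "Cauchy c"
  proof (rule CauchyI)
    fix e :: real assume "e > 0"
    then obtain N where "inverse (Suc N) < e\<^sup>2 / 4"
      using reals_Archimedean[of "e\<^sup>2 / 4"] by auto
    then have N: "4 / Suc N < e\<^sup>2" by (simp add: field_simps)
    have "norm (c m - c n) < e" if "m \<ge> N" "n \<ge> N" for m n
    proof -
      have "2 / Suc m \<le> 2 / Suc N" "2 / Suc n \<le> 2 / Suc N"
        using that by (simp_all add: frac_le)
      then have "(norm (c m - c n))\<^sup>2 < e\<^sup>2" using c_close[of m n] N by linarith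
      then show ?thesis using \<open>e > 0\<close> by (simp add: power_less_imp_less_base)
    qed
    then show "\<exists>M. \<forall>m\<ge>M. \<forall>n\<ge>M. norm (c m - c n) < e" by blast
  qed
  then obtain p where p: "c \<longlonglongrightarrow> p" by (auto simp: Cauchy_convergent_iff convergent_def)
  have "p \<in> C" using closed_sequentially[OF C_closed _ p] c_in by blast
  have "(\<lambda>n. (norm (x - c n))\<^sup>2) \<longlonglongrightarrow> (norm (x - p))\<^sup>2"
    by (intro tendsto_intros p)
  moreover have "(\<lambda>n. 1 / real (Suc n)) \<longlonglongrightarrow> 0"
    using LIMSEQ_Suc[OF lim_1_over_n] by simp
  then have "(\<lambda>n. d\<^sup>2 + 1 / Suc n) \<longlonglongrightarrow> d\<^sup>2 + 0"
    by (intro tendsto_intros)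
  ultimately have "(norm (x - p))\<^sup>2 \<le> d\<^sup>2"
    using c_near by (simp add: LIMSEQ_le less_imp_le)
  then have "norm (x - p) \<le> d"
    using infdist_nonneg[of x C] by (simp add: d_def power2_le_iff_abs_le)
  then show ?thesis using \<open>p \<in> C\<close> d_le by (meson order_trans)
qed

lemma metric_proj_nearest: "metric_proj C x \<in> C \<and> (\<forall>y\<in>C. norm (x - metric_proj C x) \<le> norm (x - y))"
  unfolding metric_proj_def by (rule someI_ex) (use nearest_point_exists in blast)

lemma metric_proj_in: "metric_proj C x \<in> C"
  using metric_proj_nearest by blast

lemma metric_proj_variational:
  assumes "v \<in> C"
  shows "inner (x - metric_proj C x) (v - metric_proj C x) \<le> 0"
proof (rule ccontr)
  define p where "p = metric_proj C x"
  assume "\<not> ?thesis"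
  then have pos: "inner (x - p) (v - p) > 0" by (simp add: p_def)
  then have "v \<noteq> p" by auto
  define t where "t = min 1 (inner (x - p) (v - p) / (norm (v - p))\<^sup>2)"
  have t: "0 < t" "t \<le> 1" "t * (norm (v - p))\<^sup>2 \<le> inner (x - p) (v - p)"
    using pos \<open>v \<noteq> p\<close> by (auto simp: t_def min_def pos_le_divide_eq)
  have "p + t *\<^sub>R (v - p) \<in> C"
    using convexD_alt[OF C_convex metric_proj_in assms, of t] t by (simp add: p_def algebra_simps)
  then have "norm (x - p) \<le> norm (x - (p + t *\<^sub>R (v - p)))"
    using metric_proj_nearest by (simp add: p_def)
  then have "(norm (x - p))\<^sup>2 \<le> (norm ((x - p) - t *\<^sub>R (v - p)))\<^sup>2"
    by (simp add: power_mono diff_diff_add)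
  also have "\<dots> = (norm (x - p))\<^sup>2 - 2 * t * inner (x - p) (v - p) + t * (t * (norm (v - p))\<^sup>2)"
    unfolding power2_norm_eq_inner
    by (simp add: inner_commute power2_eq_square algebra_simps)
  finally have "2 * inner (x - p) (v - p) \<le> t * (norm (v - p))\<^sup>2" using t by simp
  then show False using t pos by linarith
qed

lemma metric_proj_eqI:
  assumes "q \<in> C" and "\<And>v. v \<in> C \<Longrightarrow> inner (x - q) (v - q) \<le> 0"
  shows "metric_proj C x = q"
proof -
  define p where "p = metric_proj C x"
  have "inner (x - p) (q - p) \<le> 0" "inner (x - q) (p - q) \<le> 0"
    using metric_proj_variational assms metric_proj_in by (auto simp: p_def)
  then have "inner (q - p) (q - p) \<le> 0"
    by (simp add: inner_commute algebra_simps)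
  then show ?thesis by (simp add: p_def flip: power2_norm_eq_inner)
qed

lemma metric_proj_firmly_nonexpansive:
  "(norm (metric_proj C x - metric_proj C y))\<^sup>2 \<le> inner (x - y) (metric_proj C x - metric_proj C y)"
  using metric_proj_variational[OF metric_proj_in, of x y] metric_proj_variational[OF metric_proj_in, of y x]
  by (simp add: power2_norm_eq_inner inner_commute algebra_simps)

end

lemma fixpoint_of_equivalent_contraction:
  fixes T :: "'a::{real_normed_vector,complete_space} \<Rightarrow> 'a" and Q :: "'a \<Rightarrow> real"
  assumes lam: "0 < lam" and Q_lower: "\<And>u. lam * (norm u)\<^sup>2 \<le> Q u"
    and Q_upper: "\<And>u. Q u \<le> \<Lambda> * (norm u)\<^sup>2"
    and q: "0 \<le> q" "q < 1"
    and contraction: "\<And>u v. Q (T u - T v) \<le> q * Q (u - v)"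
  shows "\<exists>w. T w = w"
proof -
  have iterate: "Q ((T ^^ n) u - (T ^^ n) v) \<le> q ^ n * Q (u - v)" for n u v
  proof (induction n)
    case (Suc n)
    have "Q ((T ^^ Suc n) u - (T ^^ Suc n) v) \<le> q * Q ((T ^^ n) u - (T ^^ n) v)"
      by (simp add: contraction)
    also have "\<dots> \<le> q * (q ^ n * Q (u - v))" using Suc q by (simp add: mult_left_mono)
    finally show ?case by simp
  qed simp
  \<comment> \<open>A high enough iterate is a contraction for the norm itself.\<close>
  have "(\<lambda>n. q ^ n * \<bar>\<Lambda>\<bar> / lam) \<longlonglongrightarrow> 0 * \<bar>\<Lambda>\<bar> / lam"
    using q lam by (intro tendsto_intros LIMSEQ_power_zero) auto
  then have "eventually (\<lambda>n. q ^ n * \<bar>\<Lambda>\<bar> / lam < 1) sequentially"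
    by (rule order_tendstoD) simp
  then obtain n where n: "q ^ n * \<bar>\<Lambda>\<bar> / lam < 1"
    by (auto simp: eventually_sequentially)
  define c where "c = sqrt (q ^ n * \<bar>\<Lambda>\<bar> / lam)"
  have c: "0 \<le> c" "c < 1" using n q lam by (auto simp: c_def)
  have "dist ((T ^^ n) u) ((T ^^ n) v) \<le> c * dist u v" for u v
  proof -
    have "lam * (norm ((T ^^ n) u - (T ^^ n) v))\<^sup>2 \<le> q ^ n * Q (u - v)"
      using Q_lower iterate by (rule order_trans)
    also have "\<dots> \<le> q ^ n * (\<bar>\<Lambda>\<bar> * (norm (u - v))\<^sup>2)"
      using Q_upper[of "u - v"] mult_right_mono[OF abs_ge_self zero_le_power2, of \<Lambda> "norm (u - v)"] q
      by (intro mult_left_mono) auto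
    finally have "(norm ((T ^^ n) u - (T ^^ n) v))\<^sup>2 \<le> (c * norm (u - v))\<^sup>2"
      using lam q by (simp add: c_def field_simps)
    then show ?thesis using c by (simp add: dist_norm power2_le_iff_abs_le)
  qed
  then obtain w where w: "(T ^^ n) w = w" and unique: "\<And>v. (T ^^ n) v = v \<Longrightarrow> v = w"
    using banach_fix_type[OF c, of "T ^^ n"] by blast
  have "(T ^^ n) (T w) = T w" by (metis w funpow_swap1)
  then show ?thesis using unique by blast
qed

lemma divergent_damping_tendsto_0:
  fixes b t :: "nat \<Rightarrow> real"
  assumes b_nonneg: "\<And>n. 0 \<le> b n" and t_nonneg: "\<And>n. K \<le> n \<Longrightarrow> 0 \<le> t n"
    and diverges: "\<not> summable t"
    and damped: "\<And>n. K \<le> n \<Longrightarrow> b (Suc n) \<le> (1 - t n) * b n"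
  shows "b \<longlonglongrightarrow> 0"
proof -
  define S where "S j = (\<Sum>i<j. t (i + K))" for j
  have bound: "b (j + K) \<le> b K * exp (- S j)" for j
  proof (induction j)
    case (Suc j)
    have "b (Suc j + K) \<le> (1 - t (j + K)) * b (j + K)" using damped[of "j + K"] by simp
    also have "\<dots> \<le> exp (- t (j + K)) * b (j + K)"
      using exp_ge_add_one_self[of "- t (j + K)"] b_nonneg by (intro mult_right_mono) auto
    also have "\<dots> \<le> exp (- t (j + K)) * (b K * exp (- S j))"
      using Suc by (intro mult_left_mono) auto
    also have "\<dots> = b K * exp (- S (Suc j))"
      by (simp add: S_def exp_add[symmetric] mult.commute mult.left_commute)
    finally show ?case .
  qed (simp add: S_def)
  have "filterlim S at_top sequentially"
    unfolding filterlim_at_top eventually_sequentially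
  proof
    fix Z
    have "\<not> summable (\<lambda>i. t (i + K))" using diverges by simp
    then obtain j0 where "Z < S j0"
      using summableI_nonneg_bounded[of "\<lambda>i. t (i + K)" Z] t_nonneg by (force simp: S_def not_le)
    moreover have "S j0 \<le> S j" if "j0 \<le> j" for j
      unfolding S_def using that t_nonneg by (intro sum_mono2) auto
    ultimately show "\<exists>j0. \<forall>j\<ge>j0. Z \<le> S j" by force
  qed
  then have "(\<lambda>j. exp (- S j)) \<longlonglongrightarrow> 0"
    by (rule filterlim_compose[OF exp_at_bot filterlim_compose[OF filterlim_uminus_at_bot_at_top]])
  then have "(\<lambda>j. b K * exp (- S j)) \<longlonglongrightarrow> 0" by (rule tendsto_mult_right_zero)
  then have "(\<lambda>j. b (j + K)) \<longlonglongrightarrow> 0"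
    by (rule Lim_null_comparison[rotated]) (simp add: b_nonneg bound)
  then show ?thesis by (rule LIMSEQ_offset)
qed

lemma damped_recursion_tendsto_0:
  fixes a t c :: "nat \<Rightarrow> real"
  assumes a_nonneg: "\<And>n. 0 \<le> a n" and t_range: "\<And>n. K \<le> n \<Longrightarrow> 0 \<le> t n \<and> t n \<le> 1"
    and diverges: "\<not> summable t" and c_lim: "c \<longlonglongrightarrow> 0"
    and recursion: "\<And>n. K \<le> n \<Longrightarrow> a (Suc n) \<le> (1 - t n) * a n + t n * c n"
  shows "a \<longlonglongrightarrow> 0"
proof (rule LIMSEQ_I)
  fix r :: real assume "0 < r"
  define e where "e = r / 2"
  have "0 < e" using \<open>0 < r\<close> by (simp add: e_def)
  obtain N0 where "\<And>n. N0 \<le> n \<Longrightarrow> c n < e"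
    using order_tendstoD(2)[OF c_lim \<open>0 < e\<close>] by (auto simp: eventually_sequentially)
  then obtain K' where K': "K \<le> K'" "\<And>n. K' \<le> n \<Longrightarrow> c n < e"
    by (metis max.bounded_iff max.cobounded1)
  \<comment> \<open>Above the level \<open>e\<close> the excess of \<open>a\<close> is damped without any forcing term.\<close>
  define d where "d n = max (a n - e) 0" for n
  have "d (Suc n) \<le> (1 - t n) * d n" if "K' \<le> n" for n
  proof -
    have t: "0 \<le> t n" "t n \<le> 1" using t_range[of n] K' that by auto
    have "a (Suc n) - e \<le> (1 - t n) * (a n - e) + t n * (c n - e)"
      using recursion[of n] K' that by (simp add: algebra_simps)
    also have "\<dots> \<le> (1 - t n) * d n + 0"
      using t K'(2)[OF that] by (intro add_mono mult_left_mono mult_nonneg_nonpos) (auto simp: d_def)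
    finally show ?thesis using t by (simp add: d_def)
  qed
  then have d_lim: "d \<longlonglongrightarrow> 0"
    using divergent_damping_tendsto_0[of d K' t] diverges t_range K' by (force simp: d_def)
  obtain N where N: "\<And>n. N \<le> n \<Longrightarrow> d n < e"
    using order_tendstoD(2)[OF d_lim \<open>0 < e\<close>] by (auto simp: eventually_sequentially)
  have "a n < r" if "N \<le> n" for n using N[OF that] by (simp add: d_def e_def max_def split: if_splits)
  then have "\<forall>n\<ge>N. norm (a n - 0) < r" using a_nonneg by simp
  then show "\<exists>N. \<forall>n\<ge>N. norm (a n - 0) < r" ..
qed

locale coercive_selfadjoint =
  fixes A :: "'a::real_inner \<Rightarrow> 'a" and lam LA :: real
  assumes linear: "linear A"
    and selfadjoint: "inner (A u) v = inner u (A v)"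
    and lam_pos: "0 < lam"
    and coercive: "lam * (norm u)\<^sup>2 \<le> inner (A u) u"
    and bounded: "norm (A u) \<le> LA * norm u"
begin

abbreviation energy :: "'a \<Rightarrow> real" where
  "energy u \<equiv> inner (A u) u"

lemma A_add: "A (u + v) = A u + A v"
  and A_diff: "A (u - v) = A u - A v"
  and A_scaleR: "A (c *\<^sub>R u) = c *\<^sub>R A u"
  and A_zero: "A 0 = 0"
  using linear by (simp_all add: linear_add linear_diff linear_scale linear_0)

lemma inner_A_commute: "inner (A u) v = inner (A v) u"
  using selfadjoint by (simp add: inner_commute)

lemma energy_nonneg: "0 \<le> energy u"
  using coercive[of u] lam_pos by (meson order_trans mult_nonneg_nonneg less_imp_le zero_le_power2)

lemma energy_le: "energy u \<le> LA * (norm u)\<^sup>2"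
proof -
  have "energy u \<le> norm (A u) * norm u" by (rule Cauchy_Schwarz_ineq2[THEN abs_le_D1])
  also have "\<dots> \<le> LA * norm u * norm u" by (simp add: bounded mult_right_mono)
  finally show ?thesis by (simp add: power2_eq_square mult.assoc)
qed

lemma energy_eq_0_iff: "energy u = 0 \<longleftrightarrow> u = 0"
  using coercive[of u] lam_pos energy_nonneg[of u]
  by (auto simp: A_zero mult_le_0_iff)

lemma norm_le_sqrt_energy: "norm u \<le> sqrt (energy u / lam)"
  using coercive[of u] lam_pos by (intro real_le_rsqrt) (simp add: field_simps)

lemma bounded_linear_A: "bounded_linear A"
  by (rule bounded_linear_intro[where K = LA]) (simp_all add: A_add A_scaleR bounded mult.commute)

lemma energy_add: "energy (u + v) = energy u + 2 * inner (A u) v + energy v"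
  and energy_diff: "energy (u - v) = energy u - 2 * inner (A u) v + energy v"
  using inner_A_commute[of v u] by (simp_all add: A_add A_diff algebra_simps)

lemma energy_minus_commute: "energy (u - v) = energy (v - u)"
  using energy_diff[of u v] energy_diff[of v u] inner_A_commute[of u v] by simp

lemma energy_cross_le: "2 * s * inner (A u) v \<le> s\<^sup>2 * energy u + energy v"
  using energy_nonneg[of "s *\<^sub>R u - v"]
  by (simp add: energy_diff A_scaleR power2_eq_square)

lemma energy_add_le:
  assumes "0 < t"
  shows "energy (u + v) \<le> (1 + t) * energy u + (1 + 1 / t) * energy v"
proof -
  have "t * (2 * inner (A u) v) \<le> t * (t * energy u + (1 / t) * energy v)"
    using energy_cross_le[of t u v] assms by (simp add: power2_eq_square algebra_simps)
  then have "2 * inner (A u) v \<le> t * energy u + (1 / t) * energy v" using assms by simp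
  then show ?thesis unfolding energy_add distrib_right by linarith
qed

lemma inj_A: "inj A"
  by (rule injI) (metis A_diff energy_eq_0_iff eq_iff_diff_eq_0 inner_zero_left)

lemma inner_inv_A: "inner (inv A (A v)) (A u - A v) = inner (A v) (u - v)"
  using selfadjoint by (simp add: inv_f_f[OF inj_A] flip: A_diff)

lemma variational_pair_eq:
  assumes "0 \<le> inner (A u) (v - u)" and "0 \<le> inner (A v) (u - v)"
  shows "u = v"
proof -
  have "energy (u - v) = - inner (A u) (v - u) - inner (A v) (u - v)"
    by (simp add: A_diff inner_diff_left inner_diff_right)
  then show ?thesis using assms energy_nonneg[of "u - v"] energy_eq_0_iff[of "u - v"] by simp
qed

lemma variational_image:
  assumes "xb \<in> S" and minimal: "\<forall>x\<in>S. 0 \<le> inner (A xb) (x - xb)"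
  shows "\<forall>v\<in>A ` S. 0 \<le> inner (inv A (A xb)) (v - A xb)"
    and "\<And>u. u \<in> A ` S \<Longrightarrow> \<forall>v\<in>A ` S. 0 \<le> inner (inv A u) (v - u) \<Longrightarrow> u = A xb"
proof -
  show "\<forall>v\<in>A ` S. 0 \<le> inner (inv A (A xb)) (v - A xb)"
    using minimal by (auto simp: inner_inv_A)
  fix u assume "u \<in> A ` S" and VI: "\<forall>v\<in>A ` S. 0 \<le> inner (inv A u) (v - u)"
  then obtain z where z: "z \<in> S" "u = A z" by blast
  then have "0 \<le> inner (inv A (A z)) (A xb - A z)" using VI assms(1) by auto
  then have "0 \<le> inner (A z) (xb - z)" by (simp add: inner_inv_A)
  then have "z = xb" using variational_pair_eq minimal z(1) by blast
  then show "u = A xb" using z(2) by simp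
qed

end

locale monotone_gvi = coercive_selfadjoint A lam LA
  for A :: "'a::{real_inner,complete_space} \<Rightarrow> 'a" and lam LA :: real +
  fixes F :: "'a \<Rightarrow> 'a" and C :: "'a set" and LF :: real
  assumes monotone: "monotone_couple A F"
    and F_lipschitz: "norm (F u - F v) \<le> LF * norm (u - v)"
    and C_ne: "C \<noteq> {}" and C_closed: "closed C" and C_convex: "convex C"
begin

abbreviation Sol_reg :: "real \<Rightarrow> 'a set" where
  "Sol_reg \<alpha> \<equiv> Sol A (\<lambda>z. F z + \<alpha> *\<^sub>R z) C"

lemma mem_Sol_reg:
  "w \<in> Sol_reg \<alpha> \<longleftrightarrow> F w + \<alpha> *\<^sub>R w \<in> C \<and> (\<forall>v\<in>C. 0 \<le> inner (A w) (v - (F w + \<alpha> *\<^sub>R w)))"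
  by (simp add: Sol_def)

lemma Sol_reg_compare:
  assumes "a \<in> Sol_reg \<alpha>" and "b \<in> Sol_reg \<beta>"
  shows "inner (A (a - b)) (\<alpha> *\<^sub>R a - \<beta> *\<^sub>R b) \<le> 0"
proof -
  have "0 \<le> inner (A a) ((F b + \<beta> *\<^sub>R b) - (F a + \<alpha> *\<^sub>R a))"
    and "0 \<le> inner (A b) ((F a + \<alpha> *\<^sub>R a) - (F b + \<beta> *\<^sub>R b))"
    using assms by (auto simp: mem_Sol_reg)
  moreover have "0 \<le> inner (A a - A b) (F a - F b)"
    using monotone by (simp add: monotone_couple_def)
  moreover have "inner (A a) ((F b + \<beta> *\<^sub>R b) - (F a + \<alpha> *\<^sub>R a))
      + inner (A b) ((F a + \<alpha> *\<^sub>R a) - (F b + \<beta> *\<^sub>R b))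
      = - inner (A a - A b) (F a - F b) - inner (A (a - b)) (\<alpha> *\<^sub>R a - \<beta> *\<^sub>R b)"
    by (simp add: A_diff algebra_simps)
  ultimately show ?thesis by linarith
qed

lemma Sol_reg_unique:
  assumes "0 < \<alpha>" and "a \<in> Sol_reg \<alpha>" and "b \<in> Sol_reg \<alpha>"
  shows "a = b"
proof -
  have "\<alpha> * energy (a - b) \<le> 0"
    using Sol_reg_compare[OF assms(2,3)] by (simp flip: scaleR_diff_right)
  then show ?thesis
    using assms(1) energy_nonneg[of "a - b"] energy_eq_0_iff[of "a - b"] by (simp add: mult_le_0_iff)
qed

lemma Sol_reg_energy_le_Sol:
  assumes "0 < \<alpha>" and a: "a \<in> Sol_reg \<alpha>" and x: "x \<in> Sol_reg 0"
  shows "0 \<le> inner (A a) (x - a)" and "energy a \<le> energy x"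
proof -
  have "\<alpha> * inner (A (a - x)) a \<le> 0" using Sol_reg_compare[OF a x] by simp
  then have "inner (A (a - x)) a \<le> 0" using assms(1) by (simp add: mult_le_0_iff)
  then show *: "0 \<le> inner (A a) (x - a)"
    using inner_A_commute[of x a] by (simp add: A_diff inner_diff_left inner_diff_right)
  show "energy a \<le> energy x"
    using * energy_cross_le[of 1 a x] by (simp add: inner_diff_right)
qed

lemma Sol_reg_energy_gap:
  assumes "0 < \<beta>" "\<beta> \<le> \<alpha>" and a: "a \<in> Sol_reg \<alpha>" and b: "b \<in> Sol_reg \<beta>"
  shows "energy (a - b) \<le> energy b - energy a"
proof (cases "\<beta> = \<alpha>")
  case True
  then have "a = b" using Sol_reg_unique[of \<alpha> a b] assms by simp
  then show ?thesis by (simp add: A_zero)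
next
  case False
  define s where "s = inner (A a) b"
  have "inner (A (a - b)) (\<alpha> *\<^sub>R a - \<beta> *\<^sub>R b) \<le> 0" by (rule Sol_reg_compare[OF a b])
  then have "\<alpha> * (energy a - s) \<le> \<beta> * (s - energy b)"
    using inner_A_commute[of b a] by (simp add: s_def A_diff algebra_simps)
  also have "\<dots> \<le> \<beta> * (energy a - s)"
    using energy_nonneg[of "a - b"] assms(1) by (intro mult_left_mono) (simp_all add: energy_diff s_def)
  finally have "(\<alpha> - \<beta>) * (energy a - s) \<le> 0" by (simp add: algebra_simps)
  then have "energy a \<le> s" using False assms(2) by (simp add: mult_le_0_iff)
  then show ?thesis by (simp add: energy_diff s_def)
qed

lemma Sol_reg_energy_antimono:
  assumes "0 < \<beta>" "\<beta> \<le> \<alpha>" and "a \<in> Sol_reg \<alpha>" and "b \<in> Sol_reg \<beta>"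
  shows "energy a \<le> energy b"
  using Sol_reg_energy_gap[OF assms] energy_nonneg[of "a - b"] by linarith

lemma Sol_reg_energy_diff_le:
  assumes "0 < \<alpha>" and a: "a \<in> Sol_reg \<alpha>" and b: "b \<in> Sol_reg \<beta>"
  shows "energy (a - b) \<le> ((\<beta> - \<alpha>) / \<alpha>)\<^sup>2 * energy b"
proof -
  define r where "r = (\<beta> - \<alpha>) / \<alpha>"
  have "\<alpha> *\<^sub>R a - \<beta> *\<^sub>R b = \<alpha> *\<^sub>R (a - b) - (\<beta> - \<alpha>) *\<^sub>R b"
    by (simp add: algebra_simps)
  then have "\<alpha> * energy (a - b) \<le> (\<beta> - \<alpha>) * inner (A (a - b)) b"
    using Sol_reg_compare[OF a b] by (simp add: inner_diff_right)
  then have "2 * energy (a - b) \<le> 2 * r * inner (A b) (a - b)"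
    using assms(1) inner_A_commute[of "a - b" b] by (simp add: r_def field_simps)
  also have "\<dots> \<le> r\<^sup>2 * energy b + energy (a - b)" by (rule energy_cross_le)
  finally show ?thesis by (simp add: r_def)
qed

definition residual :: "real \<Rightarrow> real \<Rightarrow> 'a \<Rightarrow> 'a" where
  "residual \<alpha> \<mu> z = metric_proj C (F z + \<alpha> *\<^sub>R z - \<mu> *\<^sub>R A z) - (F z + \<alpha> *\<^sub>R z)"

definition step :: "real \<Rightarrow> real \<Rightarrow> real \<Rightarrow> 'a \<Rightarrow> 'a" where
  "step \<alpha> \<mu> h z = z + h *\<^sub>R residual \<alpha> \<mu> z"

lemma residual_eq_0_iff:
  assumes "0 < \<mu>"
  shows "residual \<alpha> \<mu> w = 0 \<longleftrightarrow> w \<in> Sol_reg \<alpha>"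
proof
  assume "residual \<alpha> \<mu> w = 0"
  then have P: "metric_proj C (F w + \<alpha> *\<^sub>R w - \<mu> *\<^sub>R A w) = F w + \<alpha> *\<^sub>R w"
    by (simp add: residual_def)
  have "F w + \<alpha> *\<^sub>R w \<in> C"
    using metric_proj_in[OF C_ne C_closed C_convex] P by metis
  moreover have "0 \<le> inner (A w) (v - (F w + \<alpha> *\<^sub>R w))" if "v \<in> C" for v
    using metric_proj_variational[OF C_ne C_closed C_convex that, of "F w + \<alpha> *\<^sub>R w - \<mu> *\<^sub>R A w"]
      assms by (simp add: P zero_le_mult_iff)
  ultimately show "w \<in> Sol_reg \<alpha>" by (simp add: mem_Sol_reg)
next
  assume "w \<in> Sol_reg \<alpha>"
  then have "metric_proj C (F w + \<alpha> *\<^sub>R w - \<mu> *\<^sub>R A w) = F w + \<alpha> *\<^sub>R w"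
    using assms by (intro metric_proj_eqI[OF C_ne C_closed C_convex]) (auto simp: mem_Sol_reg)
  then show "residual \<alpha> \<mu> w = 0" by (simp add: residual_def)
qed

lemma step_fixpoint_iff: "0 < \<mu> \<Longrightarrow> 0 < h \<Longrightarrow> step \<alpha> \<mu> h w = w \<longleftrightarrow> w \<in> Sol_reg \<alpha>"
  by (simp add: step_def residual_eq_0_iff)

lemma residual_cross_le:
  fixes z1 z2 :: 'a
  assumes "0 \<le> \<mu>" and "0 \<le> \<alpha>"
  defines "d \<equiv> z1 - z2" and "e \<equiv> residual \<alpha> \<mu> z1 - residual \<alpha> \<mu> z2"
  shows "2 * \<mu> * inner (A d) e
    \<le> (LF + \<alpha>)\<^sup>2 * (norm d)\<^sup>2 - (norm e)\<^sup>2 - 2 * \<mu> * \<alpha> * energy d"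
proof -
  define g where "g = (F z1 + \<alpha> *\<^sub>R z1) - (F z2 + \<alpha> *\<^sub>R z2)"
  have "(norm (e + g))\<^sup>2 \<le> inner (g - \<mu> *\<^sub>R A d) (e + g)"
    using metric_proj_firmly_nonexpansive[OF C_ne C_closed C_convex,
        of "F z1 + \<alpha> *\<^sub>R z1 - \<mu> *\<^sub>R A z1" "F z2 + \<alpha> *\<^sub>R z2 - \<mu> *\<^sub>R A z2"]
    by (simp add: e_def g_def d_def residual_def A_diff algebra_simps)
  moreover have "(norm (e + g))\<^sup>2 = (norm e)\<^sup>2 + 2 * inner e g + (norm g)\<^sup>2"
    by (simp add: power2_norm_eq_inner inner_add_left inner_add_right inner_commute)
  moreover have "inner (g - \<mu> *\<^sub>R A d) (e + g) = inner e g + (norm g)\<^sup>2 - \<mu> * inner (A d) e - \<mu> * inner (A d) g"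
    by (simp add: power2_norm_eq_inner inner_commute algebra_simps)
  ultimately have firm: "\<mu> * inner (A d) e \<le> - (norm e)\<^sup>2 - inner e g - \<mu> * inner (A d) g"
    by linarith
  have "\<alpha> * energy d \<le> inner (A d) g"
    using monotone by (simp add: monotone_couple_def g_def d_def A_diff algebra_simps)
  then have mono: "\<mu> * \<alpha> * energy d \<le> \<mu> * inner (A d) g"
    using assms(1) by (simp add: mult_left_mono mult.assoc)
  have "norm g \<le> norm (F z1 - F z2) + norm (\<alpha> *\<^sub>R d)"
    unfolding g_def d_def by (rule order_trans[OF _ norm_triangle_ineq]) (simp add: algebra_simps)
  then have "norm g \<le> (LF + \<alpha>) * norm d"
    using F_lipschitz[of z1 z2] assms(2) by (simp add: d_def distrib_right)
  then have "norm e * norm g \<le> norm e * ((LF + \<alpha>) * norm d)" by (simp add: mult_left_mono)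
  moreover have "2 * (norm e * ((LF + \<alpha>) * norm d)) \<le> (norm e)\<^sup>2 + ((LF + \<alpha>) * norm d)\<^sup>2"
    using sum_squares_bound[of "norm e" "(LF + \<alpha>) * norm d"] by (simp add: power2_eq_square)
  moreover have "- inner e g \<le> norm e * norm g"
    using Cauchy_Schwarz_ineq2[of e g] by linarith
  ultimately show ?thesis using firm mono by (simp add: power_mult_distrib)
qed

lemma step_energy_contraction:
  assumes "0 \<le> \<alpha>" "0 < \<mu>" "0 \<le> h"
    and small_step: "h * \<mu> * LA \<le> 1" and strong_reg: "(LF + \<alpha>)\<^sup>2 \<le> lam * \<alpha> * \<mu>"
  shows "energy (step \<alpha> \<mu> h z1 - step \<alpha> \<mu> h z2) \<le> (1 - h * \<alpha>) * energy (z1 - z2)"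
proof -
  define d where "d = z1 - z2"
  define e where "e = residual \<alpha> \<mu> z1 - residual \<alpha> \<mu> z2"
  have "step \<alpha> \<mu> h z1 - step \<alpha> \<mu> h z2 = d + h *\<^sub>R e"
    by (simp add: step_def d_def e_def algebra_simps)
  then have expand: "energy (step \<alpha> \<mu> h z1 - step \<alpha> \<mu> h z2)
      = energy d + 2 * h * inner (A d) e + h\<^sup>2 * energy e"
    by (simp add: energy_add A_scaleR power2_eq_square)
  have "h / \<mu> * (2 * \<mu> * inner (A d) e)
      \<le> h / \<mu> * ((LF + \<alpha>)\<^sup>2 * (norm d)\<^sup>2 - (norm e)\<^sup>2 - 2 * \<mu> * \<alpha> * energy d)"
    using residual_cross_le[of \<mu> \<alpha> z1 z2] assms(1-3)
    by (intro mult_left_mono) (simp_all add: d_def e_def)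
  then have cross: "2 * h * inner (A d) e
      \<le> h / \<mu> * ((LF + \<alpha>)\<^sup>2 * (norm d)\<^sup>2) - h / \<mu> * (norm e)\<^sup>2 - 2 * h * \<alpha> * energy d"
    using assms(2) by (simp add: right_diff_distrib)
  have "h\<^sup>2 * energy e \<le> h\<^sup>2 * (LA * (norm e)\<^sup>2)"
    by (simp add: energy_le mult_left_mono)
  also have "\<dots> = h / \<mu> * (h * \<mu> * LA) * (norm e)\<^sup>2"
    using assms(2) by (simp add: power2_eq_square)
  also have "\<dots> \<le> h / \<mu> * 1 * (norm e)\<^sup>2"
    using small_step assms(2,3) by (intro mult_right_mono mult_left_mono) auto
  finally have quadratic: "h\<^sup>2 * energy e \<le> h / \<mu> * (norm e)\<^sup>2" by simp
  have "h / \<mu> * ((LF + \<alpha>)\<^sup>2 * (norm d)\<^sup>2) \<le> h / \<mu> * (lam * \<alpha> * \<mu> * (norm d)\<^sup>2)"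
    using strong_reg assms(2,3) by (intro mult_left_mono mult_right_mono) auto
  also have "\<dots> = h * \<alpha> * (lam * (norm d)\<^sup>2)"
    using assms(2) by simp
  also have "\<dots> \<le> h * \<alpha> * energy d"
    using assms(1,3) coercive by (intro mult_left_mono) auto
  finally have "h / \<mu> * ((LF + \<alpha>)\<^sup>2 * (norm d)\<^sup>2) \<le> h * \<alpha> * energy d" .
  then show ?thesis
    using expand cross quadratic by (simp add: d_def algebra_simps)
qed

lemma Sol_reg_nonempty:
  assumes "0 < \<alpha>"
  shows "\<exists>w. w \<in> Sol_reg \<alpha>"
proof -
  define \<mu> where "\<mu> = (LF + \<alpha>)\<^sup>2 / (lam * \<alpha>) + 1"
  define h where "h = min (1 / (\<mu> * (\<bar>LA\<bar> + 1))) (1 / \<alpha>)"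
  have "0 < \<mu>" using assms lam_pos by (simp add: \<mu>_def add_nonneg_pos)
  then have "0 < h" using assms by (simp add: h_def)
  have "h * (\<mu> * (\<bar>LA\<bar> + 1)) \<le> 1"
    using \<open>0 < \<mu>\<close> by (simp add: h_def min_le_iff_disj pos_le_divide_eq[symmetric])
  moreover have "h * \<mu> * LA \<le> h * (\<mu> * (\<bar>LA\<bar> + 1))"
    using \<open>0 < h\<close> \<open>0 < \<mu>\<close> by (simp add: mult.assoc mult_left_mono)
  ultimately have "h * \<mu> * LA \<le> 1" by linarith
  moreover have "(LF + \<alpha>)\<^sup>2 \<le> lam * \<alpha> * \<mu>"
    using assms lam_pos by (simp add: \<mu>_def field_simps)
  moreover have "h * \<alpha> \<le> 1"
    using assms by (simp add: h_def min_le_iff_disj pos_le_divide_eq[symmetric])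
  ultimately have "energy (step \<alpha> \<mu> h u - step \<alpha> \<mu> h v) \<le> (1 - h * \<alpha>) * energy (u - v)" for u v
    using assms \<open>0 < \<mu>\<close> \<open>0 < h\<close> by (intro step_energy_contraction) auto
  then obtain w where "step \<alpha> \<mu> h w = w"
    using fixpoint_of_equivalent_contraction[where Q = energy and T = "step \<alpha> \<mu> h",
        OF lam_pos coercive energy_le, of "1 - h * \<alpha>"]
      \<open>h * \<alpha> \<le> 1\<close> \<open>0 < h\<close> assms by auto
  then show ?thesis using step_fixpoint_iff \<open>0 < \<mu>\<close> \<open>0 < h\<close> by blast
qed

definition reg_sol :: "real \<Rightarrow> 'a" where
  "reg_sol \<alpha> = (THE w. w \<in> Sol_reg \<alpha>)"

lemma reg_sol: "0 < \<alpha> \<Longrightarrow> reg_sol \<alpha> \<in> Sol_reg \<alpha>"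
  unfolding reg_sol_def
  by (rule theI') (use Sol_reg_nonempty Sol_reg_unique in blast)

lemma reg_sol_Cauchy:
  assumes "x0 \<in> Sol_reg 0" and \<alpha>_pos: "\<And>k. 0 < \<alpha> k" and \<alpha>_lim: "\<alpha> \<longlonglongrightarrow> 0"
  shows "Cauchy (\<lambda>k. reg_sol (\<alpha> k))"
proof -
  define N where "N \<beta> = energy (reg_sol \<beta>)" for \<beta>
  have N_antimono: "N \<beta> \<le> N \<gamma>" if "0 < \<gamma>" "\<gamma> \<le> \<beta>" for \<beta> \<gamma>
    using Sol_reg_energy_antimono[OF that reg_sol reg_sol] that by (simp add: N_def)
  have "bdd_above (N ` {0<..})"
    using Sol_reg_energy_le_Sol(2)[OF _ reg_sol assms(1)] by (auto simp: N_def bdd_above_def)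
  \<comment> \<open>The energies increase as the regularization vanishes, and their supremum is the limit.\<close>
  define L where "L = (SUP \<beta>\<in>{0<..}. N \<beta>)"
  have "(\<lambda>k. N (\<alpha> k)) \<longlonglongrightarrow> L"
  proof (rule order_tendstoI)
    fix y assume "y < L"
    then obtain \<beta> where "0 < \<beta>" "y < N \<beta>"
      using less_cSUP_iff[OF _ \<open>bdd_above _\<close>] by (auto simp: L_def)
    then have "y < N (\<alpha> k)" if "\<alpha> k < \<beta>" for k
      using N_antimono[OF \<alpha>_pos less_imp_le[OF that]] by linarith
    then show "eventually (\<lambda>k. y < N (\<alpha> k)) sequentially"
      using order_tendstoD(2)[OF \<alpha>_lim \<open>0 < \<beta>\<close>] by (auto elim: eventually_mono)
  next
    fix y assume "L < y"
    have "N (\<alpha> k) \<le> L" for k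
      unfolding L_def using \<alpha>_pos by (intro cSUP_upper \<open>bdd_above _\<close>) simp
    then show "eventually (\<lambda>k. N (\<alpha> k) < y) sequentially"
      using \<open>L < y\<close> by (intro always_eventually allI) (rule le_less_trans)
  qed
  then have "Cauchy (\<lambda>k. N (\<alpha> k))" by (rule LIMSEQ_imp_Cauchy)
  have gap: "energy (reg_sol \<beta> - reg_sol \<gamma>) \<le> \<bar>N \<beta> - N \<gamma>\<bar>" if "0 < \<beta>" "0 < \<gamma>" for \<beta> \<gamma>
  proof (cases "\<gamma> \<le> \<beta>")
    case True
    then show ?thesis using Sol_reg_energy_gap[OF that(2) True reg_sol reg_sol] that by (simp add: N_def)
  next
    case False
    then show ?thesis
      using Sol_reg_energy_gap[OF that(1) _ reg_sol reg_sol, of \<gamma>] that energy_minus_commute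
      by (simp add: N_def)
  qed
  show ?thesis
  proof (rule CauchyI)
    fix r :: real assume "0 < r"
    then obtain M where M: "\<And>m n. M \<le> m \<Longrightarrow> M \<le> n \<Longrightarrow> \<bar>N (\<alpha> m) - N (\<alpha> n)\<bar> < lam * r\<^sup>2"
      using CauchyD[OF \<open>Cauchy (\<lambda>k. N (\<alpha> k))\<close>, of "lam * r\<^sup>2"] lam_pos by auto
    have "norm (reg_sol (\<alpha> m) - reg_sol (\<alpha> n)) < r" if "M \<le> m" "M \<le> n" for m n
    proof -
      have "norm (reg_sol (\<alpha> m) - reg_sol (\<alpha> n)) \<le> sqrt (energy (reg_sol (\<alpha> m) - reg_sol (\<alpha> n)) / lam)"
        by (rule norm_le_sqrt_energy)
      also have "\<dots> < sqrt (r\<^sup>2)"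
        using gap[OF \<alpha>_pos \<alpha>_pos, of m n] M[OF that] lam_pos
        by (intro real_sqrt_less_mono) (simp add: pos_divide_less_eq mult.commute)
      finally show ?thesis using \<open>0 < r\<close> by simp
    qed
    then show "\<exists>M. \<forall>m\<ge>M. \<forall>n\<ge>M. norm (reg_sol (\<alpha> m) - reg_sol (\<alpha> n)) < r" by blast
  qed
qed

lemma isCont_F: "isCont F u"
proof -
  have "\<bar>LF\<bar>-lipschitz_on UNIV F"
  proof (rule lipschitz_onI)
    fix u v :: 'a
    have "norm (F u - F v) \<le> LF * norm (u - v)" by (rule F_lipschitz)
    also have "\<dots> \<le> \<bar>LF\<bar> * norm (u - v)" by (simp add: mult_right_mono)
    finally show "dist (F u) (F v) \<le> \<bar>LF\<bar> * dist u v" by (simp add: dist_norm)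
  qed simp
  then show ?thesis
    using lipschitz_on_continuous_on continuous_on_eq_continuous_at[OF open_UNIV] by blast
qed

lemma reg_sol_limit:
  assumes \<alpha>_pos: "\<And>k. 0 < \<alpha> k" and \<alpha>_lim: "\<alpha> \<longlonglongrightarrow> 0"
    and lim: "(\<lambda>k. reg_sol (\<alpha> k)) \<longlonglongrightarrow> xb"
  shows "xb \<in> Sol_reg 0" and "\<forall>x\<in>Sol_reg 0. 0 \<le> inner (A xb) (x - xb)"
proof -
  define w where "w k = reg_sol (\<alpha> k)" for k
  have w: "w k \<in> Sol_reg (\<alpha> k)" for k using reg_sol[OF \<alpha>_pos] by (simp add: w_def)
  have Aw: "(\<lambda>k. A (w k)) \<longlonglongrightarrow> A xb"
    using bounded_linear.tendsto[OF bounded_linear_A lim] by (simp add: w_def)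
  have "(\<lambda>k. F (w k) + \<alpha> k *\<^sub>R w k) \<longlonglongrightarrow> F xb + 0 *\<^sub>R xb"
    using isCont_tendsto_compose[OF isCont_F lim] tendsto_scaleR[OF \<alpha>_lim lim]
    by (intro tendsto_add) (simp_all add: w_def)
  then have Gw: "(\<lambda>k. F (w k) + \<alpha> k *\<^sub>R w k) \<longlonglongrightarrow> F xb" by simp
  have "F xb \<in> C"
    using closed_sequentially[OF C_closed _ Gw] w by (simp add: mem_Sol_reg)
  moreover have "0 \<le> inner (A xb) (v - F xb)" if "v \<in> C" for v
  proof (rule LIMSEQ_le_const)
    show "(\<lambda>k. inner (A (w k)) (v - (F (w k) + \<alpha> k *\<^sub>R w k))) \<longlonglongrightarrow> inner (A xb) (v - F xb)"
      by (intro tendsto_inner Aw tendsto_diff tendsto_const Gw)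
    show "\<exists>N. \<forall>k\<ge>N. 0 \<le> inner (A (w k)) (v - (F (w k) + \<alpha> k *\<^sub>R w k))"
      using w that by (auto simp: mem_Sol_reg)
  qed
  ultimately show "xb \<in> Sol_reg 0" by (simp add: Sol_def)
  show "\<forall>x\<in>Sol_reg 0. 0 \<le> inner (A xb) (x - xb)"
  proof
    fix x assume "x \<in> Sol_reg 0"
    show "0 \<le> inner (A xb) (x - xb)"
    proof (rule LIMSEQ_le_const)
      show "(\<lambda>k. inner (A (w k)) (x - w k)) \<longlonglongrightarrow> inner (A xb) (x - xb)"
        unfolding w_def by (intro tendsto_inner Aw[unfolded w_def] tendsto_diff tendsto_const lim)
      show "\<exists>N. \<forall>k\<ge>N. 0 \<le> inner (A (w k)) (x - w k)"
        using Sol_reg_energy_le_Sol(1)[OF \<alpha>_pos w \<open>x \<in> Sol_reg 0\<close>] by blast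
    qed
  qed
qed

lemma eventually_step_conditions:
  assumes \<alpha>_pos: "\<And>k. 0 < \<alpha> k" and \<mu>_pos: "\<And>k. 0 < \<mu> k"
    and \<mu>h_lim: "(\<lambda>k. \<mu> k * h k) \<longlonglongrightarrow> 0"
    and \<mu>\<alpha>_lim: "filterlim (\<lambda>k. \<mu> k * \<alpha> k) at_top sequentially"
    and \<alpha>_lim: "\<alpha> \<longlonglongrightarrow> 0"
  shows "eventually (\<lambda>k. h k * \<mu> k * LA \<le> 1 \<and> (LF + \<alpha> k)\<^sup>2 \<le> lam * \<alpha> k * \<mu> k \<and> h k * \<alpha> k \<le> 1)
    sequentially"
proof -
  have "(\<lambda>k. \<mu> k * h k * LA) \<longlonglongrightarrow> 0 * LA" by (intro tendsto_intros \<mu>h_lim)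
  then have "eventually (\<lambda>k. \<mu> k * h k * LA < 1) sequentially" by (rule order_tendstoD) simp
  then have step_small: "eventually (\<lambda>k. h k * \<mu> k * LA \<le> 1) sequentially"
    by eventually_elim (simp add: mult.commute)
  have "(\<lambda>k. (LF + \<alpha> k)\<^sup>2) \<longlonglongrightarrow> (LF + 0)\<^sup>2" by (intro tendsto_intros \<alpha>_lim)
  then have "eventually (\<lambda>k. (LF + \<alpha> k)\<^sup>2 < LF\<^sup>2 + 1) sequentially" by (rule order_tendstoD) simp
  moreover have "eventually (\<lambda>k. (LF\<^sup>2 + 1) / lam \<le> \<mu> k * \<alpha> k) sequentially"
    using \<mu>\<alpha>_lim by (simp add: filterlim_at_top)
  ultimately have strongly_reg: "eventually (\<lambda>k. (LF + \<alpha> k)\<^sup>2 \<le> lam * \<alpha> k * \<mu> k) sequentially"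
    by eventually_elim (simp add: pos_divide_le_eq[OF lam_pos] mult_ac)
  have "h k * \<alpha> k = \<mu> k * h k * (\<alpha> k)\<^sup>2 * inverse (\<mu> k * \<alpha> k)" for k
    using \<alpha>_pos[of k] \<mu>_pos[of k] by (simp add: field_simps power2_eq_square)
  then have "(\<lambda>k. h k * \<alpha> k) = (\<lambda>k. \<mu> k * h k * (\<alpha> k)\<^sup>2 * inverse (\<mu> k * \<alpha> k))"
    by (rule ext)
  also have "\<dots> \<longlonglongrightarrow> 0 * 0\<^sup>2 * 0"
    by (intro tendsto_mult tendsto_power \<mu>h_lim \<alpha>_lim tendsto_inverse_0_at_top \<mu>\<alpha>_lim)
  finally have "(\<lambda>k. h k * \<alpha> k) \<longlonglongrightarrow> 0" by simp
  then have "eventually (\<lambda>k. h k * \<alpha> k < 1) sequentially" by (rule order_tendstoD) simp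
  with step_small strongly_reg show ?thesis by eventually_elim simp
qed

lemma step_energy_recursion:
  assumes "0 < \<alpha>" "0 < \<alpha>'" "0 < \<mu>" "0 < h"
    and small_step: "h * \<mu> * LA \<le> 1" and strong_reg: "(LF + \<alpha>)\<^sup>2 \<le> lam * \<alpha> * \<mu>"
    and "h * \<alpha> \<le> 1" and B: "energy (reg_sol \<alpha>') \<le> B"
  defines "t \<equiv> h * \<alpha> / 2"
  shows "energy (step \<alpha> \<mu> h z - reg_sol \<alpha>')
    \<le> (1 - t) * energy (z - reg_sol \<alpha>) + t * (8 * B * (\<bar>\<alpha> - \<alpha>'\<bar> / (h * \<alpha>\<^sup>2))\<^sup>2)"
proof -
  \<comment> \<open>Split the error into the contracted error towards the old fixed point and
    the drift of the fixed point.\<close>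
  define w where "w = reg_sol \<alpha>"
  define p where "p = step \<alpha> \<mu> h z - w"
  define q where "q = w - reg_sol \<alpha>'"
  have t: "0 < t" "t \<le> 1 / 2" using assms(1,4,7) by (simp_all add: t_def)
  have "step \<alpha> \<mu> h w = w" using step_fixpoint_iff reg_sol assms(1,3,4) by (simp add: w_def)
  then have "energy p \<le> (1 - 2 * t) * energy (z - w)"
    using step_energy_contraction[of \<alpha> \<mu> h z w] assms(1,3,4) small_step strong_reg
    by (simp add: p_def t_def)
  then have "(1 + t) * energy p \<le> (1 + t) * ((1 - 2 * t) * energy (z - w))"
    using t by (simp add: mult_left_mono)
  also have "\<dots> \<le> (1 - t) * energy (z - w)"
    using mult_nonneg_nonneg[OF mult_nonneg_nonneg energy_nonneg, of t t "z - w"] t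
    by (simp add: algebra_simps del: inner_diff_right)
  finally have P: "(1 + t) * energy p \<le> (1 - t) * energy (z - w)" .
  have "energy q \<le> ((\<alpha>' - \<alpha>) / \<alpha>)\<^sup>2 * energy (reg_sol \<alpha>')"
    unfolding q_def w_def by (rule Sol_reg_energy_diff_le[OF assms(1) reg_sol reg_sol]) fact+
  also have "\<dots> \<le> ((\<alpha>' - \<alpha>) / \<alpha>)\<^sup>2 * B" using B by (simp add: mult_left_mono)
  finally have "(1 + 1 / t) * energy q \<le> 2 / t * (((\<alpha>' - \<alpha>) / \<alpha>)\<^sup>2 * B)"
    using t energy_nonneg[of q]
    by (intro order_trans[OF mult_right_mono mult_left_mono]) (simp_all add: field_simps)
  also have "\<dots> = t * (8 * B * (\<bar>\<alpha> - \<alpha>'\<bar> / (h * \<alpha>\<^sup>2))\<^sup>2)"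
    using assms(1,4) by (simp add: t_def power2_commute[of \<alpha>' \<alpha>] field_simps eval_nat_numeral)
  finally have Q: "(1 + 1 / t) * energy q \<le> t * (8 * B * (\<bar>\<alpha> - \<alpha>'\<bar> / (h * \<alpha>\<^sup>2))\<^sup>2)" .
  have "step \<alpha> \<mu> h z - reg_sol \<alpha>' = p + q" by (simp add: p_def q_def)
  then show ?thesis
    using energy_add_le[OF t(1), of p q] P Q by (simp add: w_def)
qed

lemma iteration_tendsto:
  assumes \<alpha>_pos: "\<And>k. 0 < \<alpha> k" and \<mu>_pos: "\<And>k. 0 < \<mu> k" and h_pos: "\<And>k. 0 < h k"
    and diverges: "\<not> summable (\<lambda>k. h k * \<alpha> k)"
    and \<mu>h_lim: "(\<lambda>k. \<mu> k * h k) \<longlonglongrightarrow> 0"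
    and \<mu>\<alpha>_lim: "filterlim (\<lambda>k. \<mu> k * \<alpha> k) at_top sequentially"
    and ratio_lim: "(\<lambda>k. \<bar>\<alpha> k - \<alpha> (Suc k)\<bar> / (h k * (\<alpha> k)\<^sup>2)) \<longlonglongrightarrow> 0"
    and \<alpha>_lim: "\<alpha> \<longlonglongrightarrow> 0"
    and iteration: "\<And>k. x (Suc k) = step (\<alpha> k) (\<mu> k) (h k) (x k)"
    and x0: "x0 \<in> Sol_reg 0" and reg_lim: "(\<lambda>k. reg_sol (\<alpha> k)) \<longlonglongrightarrow> xb"
  shows "x \<longlonglongrightarrow> xb"
proof -
  define B where "B = energy x0"
  define a where "a k = energy (x k - reg_sol (\<alpha> k))" for k
  define t where "t k = h k * \<alpha> k / 2" for k
  define c where "c k = 8 * B * (\<bar>\<alpha> k - \<alpha> (Suc k)\<bar> / (h k * (\<alpha> k)\<^sup>2))\<^sup>2" for k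
  obtain K where K: "\<And>k. K \<le> k \<Longrightarrow>
      h k * \<mu> k * LA \<le> 1 \<and> (LF + \<alpha> k)\<^sup>2 \<le> lam * \<alpha> k * \<mu> k \<and> h k * \<alpha> k \<le> 1"
    using eventually_step_conditions[OF \<alpha>_pos \<mu>_pos \<mu>h_lim \<mu>\<alpha>_lim \<alpha>_lim]
    by (auto simp: eventually_sequentially)
  have "a \<longlonglongrightarrow> 0"
  proof (rule damped_recursion_tendsto_0)
    show "0 \<le> a k" for k by (simp add: a_def energy_nonneg)
    show "0 \<le> t k \<and> t k \<le> 1" if "K \<le> k" for k
      using K[OF that] \<alpha>_pos[of k] h_pos[of k] by (simp add: t_def)
    show "\<not> summable t"
      using diverges by (simp add: t_def[abs_def])
    have "c \<longlonglongrightarrow> 8 * B * 0\<^sup>2" unfolding c_def by (intro tendsto_intros ratio_lim)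
    then show "c \<longlonglongrightarrow> 0" by simp
    show "a (Suc k) \<le> (1 - t k) * a k + t k * c k" if "K \<le> k" for k
      using step_energy_recursion[where \<alpha> = "\<alpha> k" and \<alpha>' = "\<alpha> (Suc k)" and \<mu> = "\<mu> k" and h = "h k"
          and B = B and z = "x k"] \<alpha>_pos \<mu>_pos h_pos K[OF that]
        Sol_reg_energy_le_Sol(2)[OF \<alpha>_pos reg_sol[OF \<alpha>_pos] x0]
      by (simp add: a_def t_def c_def B_def iteration)
  qed
  then have "(\<lambda>k. sqrt (a k / lam)) \<longlonglongrightarrow> sqrt (0 / lam)"
    using lam_pos by (intro tendsto_intros) auto
  moreover have "\<forall>k. norm (x k - reg_sol (\<alpha> k)) \<le> sqrt (a k / lam)"
    by (simp add: a_def norm_le_sqrt_energy)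
  ultimately have "(\<lambda>k. x k - reg_sol (\<alpha> k)) \<longlonglongrightarrow> 0"
    using Lim_null_comparison[OF always_eventually] by simp
  from tendsto_add[OF this reg_lim] show ?thesis by simp
qed

end

theorem theorem4p1:
  fixes A F :: "'a::{real_inner,complete_space} \<Rightarrow> 'a"
    and C :: "'a set"
    and lam LA LF :: real
    and \<alpha> \<mu> h :: "nat \<Rightarrow> real"
    and x y :: "nat \<Rightarrow> 'a"
  assumes C_ne: "C \<noteq> {}" and C_closed: "closed C" and C_convex: "convex C"
    and A_linear: "linear A"
    and A_selfadj: "\<forall>u v. inner (A u) v = inner u (A v)"
    and lam_pos: "lam > 0"
    and A_strong: "\<forall>u v. inner (A u - A v) (u - v) \<ge> lam * (norm (u - v))\<^sup>2"
    and A_lip: "\<forall>u v. norm (A u - A v) \<le> LA * norm (u - v)"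
    and F_lip: "\<forall>u v. norm (F u - F v) \<le> LF * norm (u - v)"
    and A_ww: "seq_weak_weak_cont A"
    and F_ww: "seq_weak_weak_cont F"
    and mono: "monotone_couple A F"
    and Sol_ne: "Sol A F C \<noteq> {}"
    and CC_convex: "convex (A ` Sol A F C)"
    and alpha_pos: "\<forall>k. \<alpha> k > 0" and mu_pos: "\<forall>k. \<mu> k > 0" and h_pos: "\<forall>k. h k > 0"
    and sum_div: "\<not> summable (\<lambda>k. h k * \<alpha> k)"
    and lim1: "(\<lambda>k. \<mu> k * h k) \<longlonglongrightarrow> 0"
    and lim2: "filterlim (\<lambda>k. \<mu> k * \<alpha> k) at_top sequentially"
    and lim3: "(\<lambda>k. \<bar>\<alpha> k - \<alpha> (Suc k)\<bar> / (h k * (\<alpha> k)\<^sup>2)) \<longlonglongrightarrow> 0"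
    and lim4: "\<alpha> \<longlonglongrightarrow> 0"
    and y_def: "\<forall>k. y k = metric_proj C (F (x k) + \<alpha> k *\<^sub>R x k - \<mu> k *\<^sub>R A (x k))"
    and x_step: "\<forall>k. x (Suc k) = x k + h k *\<^sub>R (y k - (F (x k) + \<alpha> k *\<^sub>R x k))"
  shows "\<exists>u. u \<in> A ` Sol A F C
           \<and> (\<forall>v\<in>A ` Sol A F C. inner (inv A u) (v - u) \<ge> 0)
           \<and> (\<forall>u'. u' \<in> A ` Sol A F C \<and> (\<forall>v\<in>A ` Sol A F C. inner (inv A u') (v - u') \<ge> 0) \<longrightarrow> u' = u)
           \<and> x \<longlonglongrightarrow> inv A u"
proof -
  interpret monotone_gvi A lam LA F C LF
    using A_strong[rule_format, of _ 0] A_lip[rule_format, of _ 0] linear_0[OF A_linear]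
    by (intro monotone_gvi.intro coercive_selfadjoint.intro monotone_gvi_axioms.intro)
      (simp_all add: A_linear A_selfadj lam_pos mono F_lip C_ne C_closed C_convex)
  from Sol_ne obtain x0 where x0: "x0 \<in> Sol_reg 0" by auto
  have \<alpha>_pos: "\<And>k. 0 < \<alpha> k" using alpha_pos by blast
  obtain xb where xb_lim: "(\<lambda>k. reg_sol (\<alpha> k)) \<longlonglongrightarrow> xb"
    using reg_sol_Cauchy[OF x0 \<alpha>_pos lim4] by (auto simp: Cauchy_convergent_iff convergent_def)
  note xb = reg_sol_limit[OF \<alpha>_pos lim4 xb_lim, simplified]
  have "x \<longlonglongrightarrow> inv A (A xb)"
    using iteration_tendsto[OF \<alpha>_pos _ _ sum_div lim1 lim2 lim3 lim4 _ x0 xb_lim] mu_pos h_pos y_def x_step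
    by (simp add: step_def residual_def inv_f_f[OF inj_A])
  then show ?thesis
    using xb(1) variational_image[OF xb] by blast
qed

end
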